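(* For all distinct $a,b\in\mathbb{B}^2$, \[ h_{\mathbb{B}^2}(a,b)\le\rho_{\mathbb{B}^2}(a,b)\le\frac{h_{\mathbb{B}^2}(a,b)}{\sqrt{1-m^2}}, \] where $m$ is the Euclidean distance from the origin to the line $L[a,b]$ through $a$ and $b$. Equality holds if $m=0$.
   Context: $\mathbb{B}^2$ is the unit disk. Hyperbolic metric: $\mathrm{sh}\frac{\rho_{\mathbb{B}^2}(a,b)}{2}=\frac{|a-b|}{\sqrt{(1-|a|^2)(1-|b|^2)}}$. Hilbert metric: for distinct $a,b$ in a bounded convex domain $G$, let $u,v$ be the intersections of the line through $a,b$ with $\partial G$, ordered $u,a,b,v$ on the line; $h_G(a,b)=\log\frac{|u-b||a-v|}{|u-a||b-v|}$. *)

theory Defs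
  imports "HOL-Analysis.Analysis"
begin

definition unit_disk :: "complex set" where
  "unit_disk = ball 0 1"

definition rho_disk :: "complex \<Rightarrow> complex \<Rightarrow> real" where
  "rho_disk a b = 2 * arsinh (cmod (a - b) / sqrt ((1 - (cmod a)\<^sup>2) * (1 - (cmod b)\<^sup>2)))"

text \<open>Hilbert metric of a bounded convex domain G: u and v are the boundary points of the
  line through a and b, ordered u, a, b, v on the line, i.e. u = a + t(b-a) with t < 0 and
  v = a + t(b-a) with t > 1.\<close>

definition hilbert_metric :: "complex set \<Rightarrow> complex \<Rightarrow> complex \<Rightarrow> real" where
  "hilbert_metric G a b =
     (let u = (THE u. u \<in> frontier G \<and> (\<exists>t::real. t < 0 \<and> u = a + of_real t * (b - a)));
          v = (THE v. v \<in> frontier G \<and> (\<exists>t::real. t > 1 \<and> v = a + of_real t * (b - a)))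
      in ln ((cmod (u - b) * cmod (a - v)) / (cmod (u - a) * cmod (b - v))))"

end

theory Submission
  imports Defs
begin

text \<open>Write \<open>a = p + x e\<close> and \<open>b = p + y e\<close> with \<open>|e| = 1\<close> and \<open>p \<bottom> e\<close>, so that \<open>p\<close> is
  the foot of the perpendicular from 0 to the line and \<open>m = |p|\<close>. The line meets the unit circle
  in \<open>p \<plusminus> r e\<close> with \<open>r = sqrt (1 - m\<^sup>2)\<close>, so both distances depend on \<open>r, x, y\<close> only, and
  a direct computation gives \<open>sinh (\<rho>/2) = sinh (h/2) / r\<close>. Hence \<open>h \<le> \<rho>\<close>, and \<open>\<rho> \<le> h / r\<close>
  follows from \<open>sinh (r z) \<le> r sinh z\<close> for \<open>0 < r \<le> 1\<close> and \<open>z \<ge> 0\<close>.\<close>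

lemma sinh_mult_le:
  fixes r z :: real
  assumes "0 < r" "r \<le> 1" "0 \<le> z"
  shows "sinh (r * z) \<le> r * sinh z"
proof -
  let ?g = "\<lambda>z. r * sinh z - sinh (r * z)"
  have "?g 0 \<le> ?g z"
  proof (rule DERIV_nonneg_imp_nondecreasing[OF \<open>0 \<le> z\<close>])
    fix t :: real
    assume "0 \<le> t" "t \<le> z"
    then have "cosh (r * t) \<le> cosh t"
      using assms by (subst cosh_real_nonneg_le_iff) (auto simp: mult_left_le_one_le)
    then have "r * cosh t - cosh (r * t) * r \<ge> 0"
      using assms by (simp add: algebra_simps mult_left_mono)
    moreover have "(?g has_real_derivative (r * cosh t - cosh (r * t) * r)) (at t)"
      by (auto intro!: derivative_eq_intros)
    ultimately show "\<exists>D. (?g has_real_derivative D) (at t) \<and> D \<ge> 0"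
      by blast
  qed
  then show ?thesis
    by simp
qed

lemma arsinh_div_le:
  fixes r s :: real
  assumes "0 < r" "r \<le> 1" "0 \<le> s"
  shows "arsinh (s / r) \<le> arsinh s / r"
proof -
  have "0 \<le> arsinh s"
    using assms(3) arsinh_real_neg_iff[of s] by linarith
  then have "s \<le> r * sinh (arsinh s / r)"
    using sinh_mult_le[of r "arsinh s / r"] assms by simp
  then have "sinh (arsinh (s / r)) \<le> sinh (arsinh s / r)"
    using assms by (simp add: divide_le_eq mult.commute)
  then show ?thesis
    by (simp only: sinh_real_le_iff)
qed

text \<open>The Hilbert distance of \<open>x < y\<close> in the interval \<open>(-r, r)\<close>, and the hyperbolic distance of
  \<open>p + x e\<close> and \<open>p + y e\<close> when \<open>|e| = 1\<close>, \<open>p \<bottom> e\<close> and \<open>r\<^sup>2 = 1 - |p|\<^sup>2\<close>.\<close>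

definition chord_hilbert :: "real \<Rightarrow> real \<Rightarrow> real \<Rightarrow> real" where
  "chord_hilbert r x y = ln ((r + y) * (r - x) / ((r + x) * (r - y)))"

definition chord_hyperbolic :: "real \<Rightarrow> real \<Rightarrow> real \<Rightarrow> real" where
  "chord_hyperbolic r x y = 2 * arsinh ((y - x) / sqrt ((r\<^sup>2 - x\<^sup>2) * (r\<^sup>2 - y\<^sup>2)))"

lemma sinh_half_chord_hilbert:
  fixes r x y :: real
  assumes "-r < x" "x < y" "y < r"
  shows "sinh (chord_hilbert r x y / 2) = r * (y - x) / sqrt ((r\<^sup>2 - x\<^sup>2) * (r\<^sup>2 - y\<^sup>2))"
proof -
  define A where "A = sqrt ((r + y) * (r - x))"
  define B where "B = sqrt ((r + x) * (r - y))"
  have "(r + y) * (r - x) > 0" "(r + x) * (r - y) > 0"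
    using assms by auto
  then have A: "A > 0" "A\<^sup>2 = (r + y) * (r - x)" and B: "B > 0" "B\<^sup>2 = (r + x) * (r - y)"
    by (auto simp: A_def B_def)
  have "chord_hilbert r x y = ln ((A / B)\<^sup>2)"
    unfolding chord_hilbert_def using A B by (simp add: power_divide)
  also have "\<dots> = 2 * ln (A / B)"
    using A B by (simp add: ln_realpow)
  finally have "sinh (chord_hilbert r x y / 2) = (A / B - B / A) / 2"
    using A B by (simp add: sinh_ln_real field_simps)
  also have "\<dots> = (A\<^sup>2 - B\<^sup>2) / (2 * (A * B))"
    using A B by (simp add: field_simps power2_eq_square)
  also have "A\<^sup>2 - B\<^sup>2 = 2 * (r * (y - x))"
    using A B by (simp add: algebra_simps)
  also have "A * B = sqrt ((r\<^sup>2 - x\<^sup>2) * (r\<^sup>2 - y\<^sup>2))"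
    unfolding A_def B_def by (simp add: real_sqrt_mult[symmetric] power2_eq_square algebra_simps)
  finally show ?thesis
    by simp
qed

lemma chord_hilbert_eq_arsinh:
  fixes r x y :: real
  assumes "-r < x" "x < y" "y < r"
  shows "chord_hilbert r x y = 2 * arsinh (r * (y - x) / sqrt ((r\<^sup>2 - x\<^sup>2) * (r\<^sup>2 - y\<^sup>2)))"
  using arg_cong[OF sinh_half_chord_hilbert[OF assms], of arsinh] by (simp add: arsinh_sinh_real)

lemma chord_hyperbolic_bounds:
  fixes r x y :: real
  assumes "r \<le> 1" "-r < x" "x < y" "y < r"
  shows "chord_hilbert r x y \<le> chord_hyperbolic r x y"
        "chord_hyperbolic r x y \<le> chord_hilbert r x y / r"
proof -
  define S where "S = r * (y - x) / sqrt ((r\<^sup>2 - x\<^sup>2) * (r\<^sup>2 - y\<^sup>2))"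
  have r: "0 < r"
    using assms by linarith
  have "r\<^sup>2 - x\<^sup>2 > 0" "r\<^sup>2 - y\<^sup>2 > 0"
    using mult_pos_pos[of "r - x" "r + x"] mult_pos_pos[of "r - y" "r + y"] assms
    by (simp_all add: algebra_simps power2_eq_square)
  then have S: "0 \<le> S"
    using assms r unfolding S_def by simp
  have h: "chord_hilbert r x y = 2 * arsinh S"
    unfolding S_def using chord_hilbert_eq_arsinh assms(2-4) .
  have rho: "chord_hyperbolic r x y = 2 * arsinh (S / r)"
    unfolding S_def chord_hyperbolic_def using r by simp
  have "S \<le> S / r"
    using S r assms(1) by (simp add: le_divide_eq mult_right_le_one_le)
  then show "chord_hilbert r x y \<le> chord_hyperbolic r x y"
    unfolding h rho by (simp flip: not_less)
  show "chord_hyperbolic r x y \<le> chord_hilbert r x y / r"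
    unfolding h rho using arsinh_div_le[OF r assms(1) S] by simp
qed

lemma chord_hyperbolic_1_eq_chord_hilbert:
  fixes x y :: real
  assumes "-1 < x" "x < y" "y < 1"
  shows "chord_hyperbolic 1 x y = chord_hilbert 1 x y"
  using chord_hilbert_eq_arsinh[of 1 x y] assms by (simp add: chord_hyperbolic_def)

lemma norm_add_scaleR_orthogonal:
  fixes p e :: "'a::real_inner"
  assumes "orthogonal p e" "norm e = 1"
  shows "(norm (p + s *\<^sub>R e))\<^sup>2 = (norm p)\<^sup>2 + s\<^sup>2"
  using norm_add_Pythagorean[of p "s *\<^sub>R e"] assms
  by (simp add: orthogonal_clauses power_mult_distrib)

lemma norm_add_scaleR_orthogonal_less_1_iff:
  fixes p e :: "'a::real_inner"
  assumes "orthogonal p e" "norm e = 1"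
  shows "norm (p + s *\<^sub>R e) < 1 \<longleftrightarrow> norm p < 1 \<and> \<bar>s\<bar> < sqrt (1 - (norm p)\<^sup>2)"
proof -
  have "norm (p + s *\<^sub>R e) < 1 \<longleftrightarrow> (norm p)\<^sup>2 + s\<^sup>2 < 1"
    using norm_add_scaleR_orthogonal[OF assms, of s] by (metis abs_norm_cancel abs_square_less_1)
  also have "\<dots> \<longleftrightarrow> norm p < 1 \<and> \<bar>s\<bar> < sqrt (1 - (norm p)\<^sup>2)"
    by (smt (verit, best) power2_le_imp_le real_sqrt_abs real_sqrt_ge_0_iff
        real_sqrt_one real_sqrt_pow2 real_sqrt_less_iff norm_ge_zero)
  finally show ?thesis .
qed

lemma norm_add_scaleR_orthogonal_eq_1_iff:
  fixes p e :: "'a::real_inner"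
  assumes "orthogonal p e" "norm e = 1"
  shows "norm (p + s *\<^sub>R e) = 1 \<longleftrightarrow> \<bar>s\<bar> = sqrt (1 - (norm p)\<^sup>2)"
proof -
  have "norm (p + s *\<^sub>R e) = 1 \<longleftrightarrow> (norm p)\<^sup>2 + s\<^sup>2 = 1"
    using norm_add_scaleR_orthogonal[OF assms, of s] by (metis abs_norm_cancel abs_square_eq_1)
  also have "\<dots> \<longleftrightarrow> s\<^sup>2 = 1 - (norm p)\<^sup>2"
    by linarith
  also have "\<dots> \<longleftrightarrow> \<bar>s\<bar> = sqrt (1 - (norm p)\<^sup>2)"
    by (metis real_sqrt_abs real_sqrt_eq_iff)
  finally show ?thesis .
qed

lemma line_orthonormal_coordinates:
  fixes a b :: "'a::real_inner"
  assumes "a \<noteq> b"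
  obtains p e x y where "norm e = 1" "orthogonal p e" "a = p + x *\<^sub>R e" "b = p + y *\<^sub>R e" "x < y"
proof
  define e where "e = (b - a) /\<^sub>R norm (b - a)"
  have "norm (b - a) > 0"
    using assms by simp
  then have e: "norm e = 1" "b - a = norm (b - a) *\<^sub>R e"
    by (simp_all add: e_def)
  then show "norm e = 1" "orthogonal (a - (a \<bullet> e) *\<^sub>R e) e"
    by (simp_all add: orthogonal_def inner_diff_left dot_square_norm)
  show "a = (a - (a \<bullet> e) *\<^sub>R e) + (a \<bullet> e) *\<^sub>R e"
    by simp
  show "b = (a - (a \<bullet> e) *\<^sub>R e) + (a \<bullet> e + norm (b - a)) *\<^sub>R e"
    using e(2) by (simp add: algebra_simps)
  show "a \<bullet> e < a \<bullet> e + norm (b - a)"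
    using \<open>norm (b - a) > 0\<close> by simp
qed

lemma affine_hull_two_points_on_line:
  fixes p e :: "'a::real_vector"
  assumes "x \<noteq> y"
  shows "affine hull {p + x *\<^sub>R e, p + y *\<^sub>R e} = range (\<lambda>s. p + s *\<^sub>R e)"
proof -
  have reparam: "p + x *\<^sub>R e + u *\<^sub>R (p + y *\<^sub>R e - (p + x *\<^sub>R e)) = p + (x + u * (y - x)) *\<^sub>R e" for u
    by (simp add: algebra_simps)
  have "affine hull {p + x *\<^sub>R e, p + y *\<^sub>R e} = (\<lambda>s. p + s *\<^sub>R e) ` range (\<lambda>u. x + u * (y - x))"
    unfolding affine_hull_2_alt image_image by (simp only: reparam)
  also have "range (\<lambda>u. x + u * (y - x)) = UNIV"
    using assms by (intro surjI[where f = "\<lambda>s. (s - x) / (y - x)"]) simp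
  finally show ?thesis .
qed

lemma infdist_0_orthogonal_line:
  fixes p e :: "'a::real_inner"
  assumes "orthogonal p e" "norm e = 1"
  shows "infdist 0 (range (\<lambda>s. p + s *\<^sub>R e)) = norm p"
proof (rule antisym)
  have "p \<in> range (\<lambda>s. p + s *\<^sub>R e)"
    by (rule range_eqI[where x = 0]) simp
  then show "infdist 0 (range (\<lambda>s. p + s *\<^sub>R e)) \<le> norm p"
    by (rule infdist_le2) (simp add: dist_norm)
  have "norm p \<le> dist 0 (p + s *\<^sub>R e)" for s
  proof -
    have "(norm p)\<^sup>2 \<le> (norm (p + s *\<^sub>R e))\<^sup>2"
      unfolding norm_add_scaleR_orthogonal[OF assms] by simp
    then show ?thesis
      unfolding dist_0_norm by (rule power2_le_imp_le) simp
  qed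
  then show "norm p \<le> infdist 0 (range (\<lambda>s. p + s *\<^sub>R e))"
    by (subst infdist_notempty) (auto intro!: cINF_greatest)
qed

lemma the_sphere_point_on_line:
  fixes p e :: "'a::real_inner"
  assumes "orthogonal p e" "norm e = 1" "s\<^sub>0 \<in> S" "\<bar>s\<^sub>0\<bar> = sqrt (1 - (norm p)\<^sup>2)"
    and "\<And>s. s \<in> S \<Longrightarrow> \<bar>s\<bar> = sqrt (1 - (norm p)\<^sup>2) \<Longrightarrow> s = s\<^sub>0"
  shows "(THE u. u \<in> sphere 0 1 \<and> (\<exists>s\<in>S. u = p + s *\<^sub>R e)) = p + s\<^sub>0 *\<^sub>R e"
proof (rule the_equality)
  have "norm (p + s\<^sub>0 *\<^sub>R e) = 1"
    using assms(4) norm_add_scaleR_orthogonal_eq_1_iff[OF assms(1,2)] by blast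
  then show "p + s\<^sub>0 *\<^sub>R e \<in> sphere 0 1 \<and> (\<exists>s\<in>S. p + s\<^sub>0 *\<^sub>R e = p + s *\<^sub>R e)"
    using assms(3) by auto
next
  fix u
  assume "u \<in> sphere 0 1 \<and> (\<exists>s\<in>S. u = p + s *\<^sub>R e)"
  then obtain s where "s \<in> S" "u = p + s *\<^sub>R e" "norm (p + s *\<^sub>R e) = 1"
    by auto
  then show "u = p + s\<^sub>0 *\<^sub>R e"
    using assms(5) norm_add_scaleR_orthogonal_eq_1_iff[OF assms(1,2)] by blast
qed

lemma hilbert_metric_unit_disk_line:
  fixes p e :: complex and x y :: real
  defines "r \<equiv> sqrt (1 - (cmod p)\<^sup>2)"
  assumes "orthogonal p e" "norm e = 1" "-r < x" "x < y" "y < r"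
  shows "hilbert_metric unit_disk (p + x *\<^sub>R e) (p + y *\<^sub>R e) = chord_hilbert r x y"
proof -
  let ?a = "p + x *\<^sub>R e" and ?b = "p + y *\<^sub>R e"
  have r: "\<bar>r\<bar> = sqrt (1 - (cmod p)\<^sup>2)" "\<bar>-r\<bar> = sqrt (1 - (cmod p)\<^sup>2)"
    using assms(4-6) by (simp_all add: r_def)
  have ray: "(\<exists>t::real. P t \<and> u = ?a + of_real t * (?b - ?a))
      \<longleftrightarrow> (\<exists>s. P ((s - x) / (y - x)) \<and> u = p + s *\<^sub>R e)" for P u
  proof -
    have "?a + of_real t * (?b - ?a) = p + (x + t * (y - x)) *\<^sub>R e" for t
      by (simp add: scaleR_conv_of_real algebra_simps)
    moreover have "s = x + (s - x) / (y - x) * (y - x)" for s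
      using assms(5) by simp
    ultimately show ?thesis
      using assms(5) by (metis nonzero_mult_div_cancel_right add_diff_cancel_left' diff_gt_0_iff_gt less_irrefl)
  qed
  have before: "(s - x) / (y - x) < 0 \<longleftrightarrow> s \<in> {..<x}"
    and after: "(s - x) / (y - x) > 1 \<longleftrightarrow> s \<in> {y<..}" for s
    using assms(5) by (simp_all add: divide_less_0_iff less_divide_eq)
  have frontier: "frontier unit_disk = sphere 0 1"
    by (simp add: unit_disk_def)
  have "(THE u. u \<in> frontier unit_disk \<and> (\<exists>t::real. t < 0 \<and> u = ?a + of_real t * (?b - ?a)))
      = (THE u. u \<in> sphere 0 1 \<and> (\<exists>s\<in>{..<x}. u = p + s *\<^sub>R e))"
    unfolding frontier ray before Bex_def ..
  also have "\<dots> = p + (-r) *\<^sub>R e"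
    by (rule the_sphere_point_on_line) (use assms(2-6) r in \<open>auto simp flip: r_def\<close>)
  finally have u: "(THE u. u \<in> frontier unit_disk \<and> (\<exists>t::real. t < 0 \<and> u = ?a + of_real t * (?b - ?a)))
      = p + (-r) *\<^sub>R e" .
  have "(THE v. v \<in> frontier unit_disk \<and> (\<exists>t::real. t > 1 \<and> v = ?a + of_real t * (?b - ?a)))
      = (THE v. v \<in> sphere 0 1 \<and> (\<exists>s\<in>{y<..}. v = p + s *\<^sub>R e))"
    unfolding frontier ray after Bex_def ..
  also have "\<dots> = p + r *\<^sub>R e"
    by (rule the_sphere_point_on_line) (use assms(2-6) r in \<open>auto simp flip: r_def\<close>)
  finally have v: "(THE v. v \<in> frontier unit_disk \<and> (\<exists>t::real. t > 1 \<and> v = ?a + of_real t * (?b - ?a)))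
      = p + r *\<^sub>R e" .
  have dist: "cmod (p + s *\<^sub>R e - (p + s' *\<^sub>R e)) = \<bar>s - s'\<bar>" for s s'
    using assms(3) by (simp flip: scaleR_diff_left)
  show ?thesis
    unfolding hilbert_metric_def Let_def u v dist chord_hilbert_def
    using assms(4-6) by (simp add: add.commute[of y] add.commute[of x])
qed

lemma rho_disk_line:
  fixes p e :: complex and x y :: real
  defines "r \<equiv> sqrt (1 - (cmod p)\<^sup>2)"
  assumes "orthogonal p e" "norm e = 1" "cmod p \<le> 1" "x < y"
  shows "rho_disk (p + x *\<^sub>R e) (p + y *\<^sub>R e) = chord_hyperbolic r x y"
proof -
  have "1 - (cmod (p + s *\<^sub>R e))\<^sup>2 = r\<^sup>2 - s\<^sup>2" for s
    using norm_add_scaleR_orthogonal[OF assms(2,3)] assms(4) by (simp add: r_def power_le_one_iff)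
  moreover have "cmod (p + x *\<^sub>R e - (p + y *\<^sub>R e)) = y - x"
    using assms(3,5) by (simp flip: scaleR_diff_left)
  ultimately show ?thesis
    by (simp add: rho_disk_def chord_hyperbolic_def)
qed

theorem corollary3p6:
  fixes a b :: complex
  assumes "a \<in> unit_disk" and "b \<in> unit_disk" and "a \<noteq> b"
  defines "m \<equiv> infdist 0 (affine hull {a, b})"
  shows "hilbert_metric unit_disk a b \<le> rho_disk a b
         \<and> rho_disk a b \<le> hilbert_metric unit_disk a b / sqrt (1 - m\<^sup>2)
         \<and> (m = 0 \<longrightarrow> rho_disk a b = hilbert_metric unit_disk a b)"
proof -
  obtain p e x y where e: "norm e = 1" "orthogonal p e"
    and ab: "a = p + x *\<^sub>R e" "b = p + y *\<^sub>R e" and "x < y"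
    using line_orthonormal_coordinates[OF assms(3)] .
  have m: "m = cmod p"
    unfolding m_def ab affine_hull_two_points_on_line[OF less_imp_neq[OF \<open>x < y\<close>]]
    using infdist_0_orthogonal_line[OF e(2,1)] .
  define r where "r = sqrt (1 - m\<^sup>2)"
  have "cmod p < 1" "\<bar>x\<bar> < r" "\<bar>y\<bar> < r"
    using assms(1,2) norm_add_scaleR_orthogonal_less_1_iff[OF e(2,1)]
    by (auto simp: unit_disk_def ab r_def m)
  then have r: "0 < r" "r \<le> 1" "-r < x" "y < r"
    by (auto simp: r_def m power_less_one_iff)
  have "hilbert_metric unit_disk a b = chord_hilbert r x y"
    using hilbert_metric_unit_disk_line[OF e(2,1)] r \<open>x < y\<close> by (simp add: ab r_def m)
  moreover have "rho_disk a b = chord_hyperbolic r x y"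
    using rho_disk_line[OF e(2,1)] \<open>cmod p < 1\<close> \<open>x < y\<close> by (simp add: ab r_def m)
  moreover have "m = 0 \<Longrightarrow> r = 1"
    by (simp add: r_def)
  ultimately show ?thesis
    using chord_hyperbolic_bounds[OF r(2,3) \<open>x < y\<close> r(4)] chord_hyperbolic_1_eq_chord_hilbert r \<open>x < y\<close>
    by (auto simp flip: r_def)
qed

end
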